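(* Let $P=\{x=x_1+x_2i+x_3j+x_4ij\in C_2:\ x_1x_4=x_2x_3,\ x\neq 0\}$. Then $P$, with the bicomplex number product, is a Lie group.
   Context: $C_2$ denotes the bicomplex numbers: the real algebra with basis $\{1,i,j,ij\}$, $i^2=j^2=-1$, $ij=ji$, identified with $\mathbb{R}^4$ via $x=x_1+x_2i+x_3j+x_4ij\leftrightarrow(x_1,x_2,x_3,x_4)$. The product is $x\times y=(x_1y_1-x_2y_2-x_3y_3+x_4y_4)+(x_1y_2+x_2y_1-x_3y_4-x_4y_3)i+(x_1y_3+x_3y_1-x_2y_4-x_4y_2)j+(x_1y_4+x_4y_1+x_2y_3+x_3y_2)ij$. *)

theory Defs
  imports "HOL-Analysis.Analysis" "HOL-Algebra.Group"
begin

text \<open>Bicomplex numbers C2 identified with real^4: x = x1 + x2 i + x3 j + x4 ij.\<close>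

definition bc_mult :: "real^4 \<Rightarrow> real^4 \<Rightarrow> real^4" where
  "bc_mult x y = vector
     [x$1*y$1 - x$2*y$2 - x$3*y$3 + x$4*y$4,
      x$1*y$2 + x$2*y$1 - x$3*y$4 - x$4*y$3,
      x$1*y$3 + x$3*y$1 - x$2*y$4 - x$4*y$2,
      x$1*y$4 + x$4*y$1 + x$2*y$3 + x$3*y$2]"

definition bc_one :: "real^4" where
  "bc_one = vector [1, 0, 0, 0]"

fun Ck_on :: "nat \<Rightarrow> 'a::euclidean_space set \<Rightarrow> ('a \<Rightarrow> 'b::real_normed_vector) \<Rightarrow> bool" where
  "Ck_on 0 S f = continuous_on S f"
| "Ck_on (Suc k) S f =
     (\<exists>f'. (\<forall>x\<in>S. (f has_derivative f' x) (at x)) \<and> (\<forall>v\<in>Basis. Ck_on k S (\<lambda>x. f' x v)))"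

definition smooth_on :: "'a::euclidean_space set \<Rightarrow> ('a \<Rightarrow> 'b::real_normed_vector) \<Rightarrow> bool" where
  "smooth_on S f \<longleftrightarrow> open S \<and> (\<forall>k. Ck_on k S f)"

definition diffeo_betw :: "'a::euclidean_space set \<Rightarrow> 'a set \<Rightarrow> ('a \<Rightarrow> 'a) \<Rightarrow> bool" where
  "diffeo_betw U V \<phi> \<longleftrightarrow> open U \<and> open V \<and> bij_betw \<phi> U V \<and>
     smooth_on U \<phi> \<and> smooth_on V (inv_into U \<phi>)"

definition embedded_submanifold :: "nat \<Rightarrow> 'a::euclidean_space set \<Rightarrow> bool" where
  "embedded_submanifold k M \<longleftrightarrow>
     (\<forall>p\<in>M. \<exists>U V \<phi>. p \<in> U \<and> diffeo_betw U V \<phi> \<and>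
        (\<exists>B\<subseteq>Basis. card B = k \<and>
           \<phi> ` (U \<inter> M) = V \<inter> {y. \<forall>i\<in>Basis - B. y \<bullet> i = 0}))"

text \<open>A subset G of a Euclidean space with a binary operation m and unit e is a Lie group
  (with the induced embedded-submanifold structure): it is a group, an embedded
  submanifold, and multiplication and inversion are smooth (i.e. extend to smooth
  maps on open neighbourhoods in the ambient space).\<close>
definition embedded_lie_group :: "('a \<Rightarrow> 'a \<Rightarrow> 'a) \<Rightarrow> 'a \<Rightarrow> 'a::euclidean_space set \<Rightarrow> bool" where
  "embedded_lie_group m e G \<longleftrightarrow>
     group \<lparr>carrier = G, mult = m, one = e\<rparr> \<and>
     (\<exists>k. embedded_submanifold k G) \<and>
     (\<exists>W m'. G \<times> G \<subseteq> W \<and> smooth_on W m' \<and> (\<forall>x\<in>G. \<forall>y\<in>G. m' (x, y) = m x y)) \<and>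
     (\<exists>U i. G \<subseteq> U \<and> smooth_on U i \<and>
        (\<forall>x\<in>G. i x = inv\<^bsub>\<lparr>carrier = G, mult = m, one = e\<rparr>\<^esub> x))"

definition P_set :: "(real^4) set" where
  "P_set = {x. x$1 * x$4 = x$2 * x$3 \<and> x \<noteq> 0}"

end

theory Submission
  imports Defs
begin

text \<open>In the idempotent decomposition \<open>C\<^sub>2 \<cong> \<complex> \<times> \<complex>\<close>, \<open>x \<mapsto> (z\<^sub>1, z\<^sub>2)\<close>
  with \<open>z\<^sub>1,\<^sub>2 = (x\<^sub>1 + x\<^sub>2i) \<mp> i(x\<^sub>3 + x\<^sub>4i)\<close>, one has
  \<open>4(x\<^sub>1x\<^sub>4 - x\<^sub>2x\<^sub>3) = |z\<^sub>1|\<^sup>2 - |z\<^sub>2|\<^sup>2\<close>, so \<open>P\<close> is the set \<open>|z\<^sub>1| = |z\<^sub>2| \<noteq> 0\<close>, a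
  subgroup of the units. The product is polynomial and the inverse is rational with
  denominator \<open>|z\<^sub>1|\<^sup>2|z\<^sub>2|\<^sup>2\<close>, which is positive on \<open>P\<close>. Near a point where \<open>x\<^sub>k \<noteq> 0\<close>,
  the defining function \<open>x\<^sub>1x\<^sub>4 - x\<^sub>2x\<^sub>3\<close> is affine in the coordinate paired with \<open>k\<close>, with
  slope \<open>\<plusminus>x\<^sub>k\<close>; replacing that coordinate by it straightens \<open>P\<close> into a hyperplane.\<close>

lemma Ck_on_Suc_imp_Ck_on: "Ck_on (Suc k) S f \<Longrightarrow> Ck_on k S f"
proof (induction k arbitrary: f)
  case 0
  then show ?case
    by (auto intro!: continuous_at_imp_continuous_on dest!: has_derivative_continuous)
next
  case (Suc k)
  then show ?case by auto
qed

lemma Ck_on_const: "Ck_on k S (\<lambda>x. c)"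
  by (induction k arbitrary: c) (auto intro!: exI[of _ "\<lambda>x v. 0"])

lemma Ck_on_bounded_linear: "bounded_linear L \<Longrightarrow> Ck_on k S L"
proof (cases k)
  case 0
  then show "bounded_linear L \<Longrightarrow> Ck_on k S L" by (simp add: linear_continuous_on)
next
  case (Suc m)
  then show "bounded_linear L \<Longrightarrow> Ck_on k S L"
    by (auto intro!: exI[of _ "\<lambda>x. L"] Ck_on_const bounded_linear_imp_has_derivative)
qed

lemma Ck_on_ident: "Ck_on k S (\<lambda>x. x)"
  by (rule Ck_on_bounded_linear[OF bounded_linear_ident])

lemma Ck_on_compose_bounded_linear:
  "bounded_linear L \<Longrightarrow> Ck_on k S f \<Longrightarrow> Ck_on k S (\<lambda>x. L (f x))"
proof (induction k arbitrary: f)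
  case 0
  then show ?case
    using continuous_on_compose[of S f L] linear_continuous_on[of L]
    by (auto simp: o_def intro: continuous_on_subset)
next
  case (Suc k)
  then obtain f' where
    f': "\<forall>x\<in>S. (f has_derivative f' x) (at x)" "\<forall>v\<in>Basis. Ck_on k S (\<lambda>x. f' x v)"
    by auto
  show ?case
    using f' Suc.IH Suc.prems(1)
    by (auto intro!: exI[of _ "\<lambda>x v. L (f' x v)"] intro: bounded_linear.has_derivative)
qed

lemma Ck_on_add: "Ck_on k S f \<Longrightarrow> Ck_on k S g \<Longrightarrow> Ck_on k S (\<lambda>x. f x + g x)"
proof (induction k arbitrary: f g)
  case 0
  then show ?case by (auto intro: continuous_on_add)
next
  case (Suc k)
  then obtain f' g' where
    "\<forall>x\<in>S. (f has_derivative f' x) (at x)" "\<forall>v\<in>Basis. Ck_on k S (\<lambda>x. f' x v)"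
    "\<forall>x\<in>S. (g has_derivative g' x) (at x)" "\<forall>v\<in>Basis. Ck_on k S (\<lambda>x. g' x v)"
    by auto
  with Suc.IH show ?case
    by (auto intro!: exI[of _ "\<lambda>x v. f' x v + g' x v"] has_derivative_add)
qed

lemma Ck_on_bounded_bilinear:
  fixes prod :: "'b::real_normed_vector \<Rightarrow> 'c::real_normed_vector \<Rightarrow> 'd::real_normed_vector"
    and f :: "'a::euclidean_space \<Rightarrow> 'b" and g :: "'a \<Rightarrow> 'c"
  assumes "bounded_bilinear prod"
  shows "Ck_on k S f \<Longrightarrow> Ck_on k S g \<Longrightarrow> Ck_on k S (\<lambda>x. prod (f x) (g x))"
proof (induction k arbitrary: f g)
  case 0
  then show ?case by (auto intro: bounded_bilinear.continuous_on[OF assms])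
next
  case (Suc k)
  then obtain f' g' where
    f': "\<forall>x\<in>S. (f has_derivative f' x) (at x)" "\<forall>v\<in>Basis. Ck_on k S (\<lambda>x. f' x v)" and
    g': "\<forall>x\<in>S. (g has_derivative g' x) (at x)" "\<forall>v\<in>Basis. Ck_on k S (\<lambda>x. g' x v)"
    by auto
  have fg: "Ck_on k S f" "Ck_on k S g"
    using Suc.prems by (blast intro: Ck_on_Suc_imp_Ck_on)+
  show ?case
  proof (simp, intro exI conjI ballI)
    fix x assume "x \<in> S"
    then show "((\<lambda>x. prod (f x) (g x)) has_derivative
        (\<lambda>v. prod (f x) (g' x v) + prod (f' x v) (g x))) (at x)"
      using f' g' by (auto intro: bounded_bilinear.FDERIV[OF assms])
  next
    fix v :: 'a assume "v \<in> Basis"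
    then show "Ck_on k S (\<lambda>x. prod (f x) (g' x v) + prod (f' x v) (g x))"
      using Suc.IH f' g' fg by (auto intro: Ck_on_add)
  qed
qed

lemmas Ck_on_mult = Ck_on_bounded_bilinear[OF bounded_bilinear_mult]
lemmas Ck_on_scaleR = Ck_on_bounded_bilinear[OF bounded_bilinear_scaleR]
lemmas Ck_on_inner = Ck_on_bounded_bilinear[OF bounded_bilinear_inner]

lemma Ck_on_inverse:
  fixes f :: "'a::euclidean_space \<Rightarrow> 'b::real_normed_div_algebra"
  shows "Ck_on k S f \<Longrightarrow> (\<forall>x\<in>S. f x \<noteq> 0) \<Longrightarrow> Ck_on k S (\<lambda>x. inverse (f x))"
proof (induction k arbitrary: f)
  case 0
  then show ?case by (auto intro: continuous_on_inverse)
next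
  case (Suc k)
  then obtain f' where
    "\<forall>x\<in>S. (f has_derivative f' x) (at x)" "\<forall>v\<in>Basis. Ck_on k S (\<lambda>x. f' x v)"
    by auto
  moreover have "Ck_on k S (\<lambda>x. inverse (f x))"
    using Suc.IH Suc.prems by (blast intro: Ck_on_Suc_imp_Ck_on)
  ultimately show ?case
    using Suc.prems
    by (auto intro!: exI[of _ "\<lambda>x v. - (inverse (f x) * f' x v * inverse (f x))"]
        Ck_on_mult Ck_on_compose_bounded_linear[where L=uminus] bounded_linear_minus
        bounded_linear_ident)
qed

lemma Ck_on_divide:
  fixes f g :: "'a::euclidean_space \<Rightarrow> 'b::real_normed_field"
  shows "Ck_on k S f \<Longrightarrow> Ck_on k S g \<Longrightarrow> (\<forall>x\<in>S. g x \<noteq> 0) \<Longrightarrow> Ck_on k S (\<lambda>x. f x / g x)"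
  using Ck_on_mult[OF _ Ck_on_inverse, of k S f g] by (simp add: divide_inverse)

lemma Ck_on_cong: "open S \<Longrightarrow> Ck_on k S f \<Longrightarrow> (\<And>x. x \<in> S \<Longrightarrow> f x = g x) \<Longrightarrow> Ck_on k S g"
proof (induction k arbitrary: f g)
  case 0
  then show ?case by (simp cong: continuous_on_cong)
next
  case (Suc k)
  then obtain f' where
    "\<forall>x\<in>S. (f has_derivative f' x) (at x)" "\<forall>v\<in>Basis. Ck_on k S (\<lambda>x. f' x v)"
    by auto
  with Suc.prems show ?case
    by (auto intro!: exI[of _ f'] intro: has_derivative_transform_within_open)
qed

lemma Ck_on_vec_nth: "Ck_on k S f \<Longrightarrow> Ck_on k S (\<lambda>x. f x $ i)"
  by (rule Ck_on_compose_bounded_linear[OF bounded_linear_vec_nth])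

lemma vector_4_nth [simp]:
  "(vector [a, b, c, d] :: 'a::zero^4) $ 1 = a"
  "(vector [a, b, c, d] :: 'a::zero^4) $ 2 = b"
  "(vector [a, b, c, d] :: 'a::zero^4) $ 3 = c"
  "(vector [a, b, c, d] :: 'a::zero^4) $ 4 = d"
  by (simp_all add: vector_def)

lemma vec4_eq_iff: "(x :: 'a^4) = y \<longleftrightarrow> x$1 = y$1 \<and> x$2 = y$2 \<and> x$3 = y$3 \<and> x$4 = y$4"
  by (auto simp: vec_eq_iff forall_4)

lemma Ck_on_vector_4:
  assumes "Ck_on k S f1" "Ck_on k S f2" "Ck_on k S f3" "Ck_on k S f4"
  shows "Ck_on k S (\<lambda>x. vector [f1 x, f2 x, f3 x, f4 x] :: real^4)"
proof -
  have "(\<lambda>x. vector [f1 x, f2 x, f3 x, f4 x] :: real^4) =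
      (\<lambda>x. f1 x *\<^sub>R axis 1 1 + f2 x *\<^sub>R axis 2 1 + f3 x *\<^sub>R axis 3 1 + f4 x *\<^sub>R axis 4 1)"
    by (simp add: fun_eq_iff vec4_eq_iff axis_def)
  then show ?thesis
    using assms by (simp add: Ck_on_add Ck_on_scaleR Ck_on_const)
qed

lemma Ck_on_uminus: "Ck_on k S f \<Longrightarrow> Ck_on k S (\<lambda>x. - f x)"
  by (rule Ck_on_compose_bounded_linear[OF bounded_linear_minus[OF bounded_linear_ident]])

lemma Ck_on_diff: "Ck_on k S f \<Longrightarrow> Ck_on k S g \<Longrightarrow> Ck_on k S (\<lambda>x. f x - g x)"
  using Ck_on_add[OF _ Ck_on_uminus, of k S f g] by simp

lemmas Ck_on_polynomial_intros =
  Ck_on_vector_4 Ck_on_add Ck_on_diff Ck_on_uminus Ck_on_mult Ck_on_const Ck_on_vec_nth Ck_on_ident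

lemma bc_mult_nth [simp]:
  "bc_mult x y $ 1 = x$1*y$1 - x$2*y$2 - x$3*y$3 + x$4*y$4"
  "bc_mult x y $ 2 = x$1*y$2 + x$2*y$1 - x$3*y$4 - x$4*y$3"
  "bc_mult x y $ 3 = x$1*y$3 + x$3*y$1 - x$2*y$4 - x$4*y$2"
  "bc_mult x y $ 4 = x$1*y$4 + x$4*y$1 + x$2*y$3 + x$3*y$2"
  by (simp_all add: bc_mult_def)

lemma bc_one_nth [simp]: "bc_one $ 1 = 1" "bc_one $ 2 = 0" "bc_one $ 3 = 0" "bc_one $ 4 = 0"
  by (simp_all add: bc_one_def)

lemma bc_mult_assoc: "bc_mult (bc_mult x y) z = bc_mult x (bc_mult y z)"
  by (simp add: vec4_eq_iff) algebra

lemma bc_mult_commute: "bc_mult x y = bc_mult y x"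
  by (simp add: vec4_eq_iff algebra_simps)

lemma bc_mult_one_left [simp]: "bc_mult bc_one x = x"
  by (simp add: vec4_eq_iff)

lemma bc_mult_zero_right [simp]: "bc_mult x 0 = 0"
  by (simp add: vec4_eq_iff)

lemma bc_mult_scaleR_left: "bc_mult (c *\<^sub>R x) y = c *\<^sub>R bc_mult x y"
  by (simp add: vec4_eq_iff algebra_simps)

lemma inner_self_vec4: "x \<bullet> x = x$1*x$1 + x$2*x$2 + x$3*x$3 + x$4*x$4" for x :: "real^4"
  by (simp add: inner_vec_def sum_4)

definition bc_det :: "real^4 \<Rightarrow> real" where
  "bc_det x = x$1*x$4 - x$2*x$3"

lemma P_set_eq: "P_set = {x. bc_det x = 0 \<and> x \<noteq> 0}"
  by (auto simp: P_set_def bc_det_def)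

lemma bc_det_mult: "bc_det (bc_mult x y) = (x \<bullet> x) * bc_det y + bc_det x * (y \<bullet> y)"
  by (simp add: bc_det_def inner_self_vec4) algebra

definition bc_norm :: "real^4 \<Rightarrow> real" where
  "bc_norm x = (x \<bullet> x)\<^sup>2 - 4 * (bc_det x)\<^sup>2"

text \<open>With \<open>z = x\<^sub>1 + x\<^sub>2i\<close>, \<open>w = x\<^sub>3 + x\<^sub>4i\<close> and \<open>a + bi = z\<^sup>2 + w\<^sup>2 = x(z - wj)\<close>,
  this is \<open>(z - wj)(a - bi)\<close>, so \<open>x \<cdot> bc_adj x = a\<^sup>2 + b\<^sup>2\<close>.\<close>

definition bc_adj :: "real^4 \<Rightarrow> real^4" where
  "bc_adj x = (let a = x$1*x$1 - x$2*x$2 + x$3*x$3 - x$4*x$4; b = 2 * (x$1*x$2 + x$3*x$4) in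
     vector [x$1*a + x$2*b, x$2*a - x$1*b, - x$3*a - x$4*b, x$3*b - x$4*a])"

lemma bc_mult_adj: "bc_mult x (bc_adj x) = bc_norm x *\<^sub>R bc_one"
  by (simp add: vec4_eq_iff bc_adj_def bc_norm_def bc_det_def inner_self_vec4 Let_def) algebra

lemma bc_det_adj: "bc_det (bc_adj x) = - bc_norm x * bc_det x"
  by (simp add: bc_adj_def bc_norm_def bc_det_def inner_self_vec4 Let_def) algebra

lemma bc_det_scaleR: "bc_det (c *\<^sub>R x) = c\<^sup>2 * bc_det x"
  by (simp add: bc_det_def power2_eq_square algebra_simps)

lemma bc_norm_pos: "x \<in> P_set \<Longrightarrow> bc_norm x > 0"
  by (simp add: P_set_eq bc_norm_def)

definition bc_inv :: "real^4 \<Rightarrow> real^4" where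
  "bc_inv x = inverse (bc_norm x) *\<^sub>R bc_adj x"

lemma bc_inv_mult: "bc_norm x \<noteq> 0 \<Longrightarrow> bc_mult (bc_inv x) x = bc_one"
  by (simp add: bc_inv_def bc_mult_scaleR_left bc_mult_commute[of "bc_adj x"] bc_mult_adj)

lemma bc_inv_in_P_set:
  assumes "x \<in> P_set"
  shows "bc_inv x \<in> P_set"
proof -
  have "bc_det (bc_inv x) = 0"
    using assms by (simp add: P_set_eq bc_inv_def bc_det_scaleR bc_det_adj)
  moreover have "bc_inv x \<noteq> 0"
    using bc_inv_mult[of x] bc_norm_pos[OF assms] by (auto simp: vec4_eq_iff bc_mult_commute)
  ultimately show ?thesis
    by (simp add: P_set_eq)
qed

lemma bc_mult_in_P_set:
  assumes "x \<in> P_set" "y \<in> P_set"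
  shows "bc_mult x y \<in> P_set"
proof -
  have "bc_det (bc_mult x y) = 0"
    using assms by (simp add: P_set_eq bc_det_mult)
  moreover have "bc_mult (bc_inv x) (bc_mult x y) = y"
    using bc_norm_pos[OF assms(1)] by (simp add: bc_mult_assoc[symmetric] bc_inv_mult)
  then have "bc_mult x y \<noteq> 0"
    using assms(2) by (auto simp: P_set_eq)
  ultimately show ?thesis
    by (simp add: P_set_eq)
qed

abbreviation P_group :: "(real^4) monoid" where
  "P_group \<equiv> \<lparr>carrier = P_set, mult = bc_mult, one = bc_one\<rparr>"

lemma group_P_group: "group P_group"
proof (rule groupI)
  show "\<one>\<^bsub>P_group\<^esub> \<in> carrier P_group"
    by (simp add: P_set_eq bc_det_def vec4_eq_iff)
  fix x assume x: "x \<in> carrier P_group"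
  show "\<exists>y\<in>carrier P_group. y \<otimes>\<^bsub>P_group\<^esub> x = \<one>\<^bsub>P_group\<^esub>"
    using x bc_inv_in_P_set bc_inv_mult bc_norm_pos by force
qed (simp_all add: bc_mult_in_P_set bc_mult_assoc)

lemma inv_P_group: "x \<in> P_set \<Longrightarrow> inv\<^bsub>P_group\<^esub> x = bc_inv x"
  using group.inv_equality[OF group_P_group] bc_inv_in_P_set bc_inv_mult bc_norm_pos
  by force

lemma Ck_on_bc_mult: "Ck_on k S f \<Longrightarrow> Ck_on k S g \<Longrightarrow> Ck_on k S (\<lambda>x. bc_mult (f x) (g x))"
  unfolding bc_mult_def by (intro Ck_on_polynomial_intros)

lemma smooth_on_bc_mult: "smooth_on UNIV (\<lambda>p. bc_mult (fst p) (snd p))"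
  by (simp add: smooth_on_def Ck_on_bc_mult Ck_on_bounded_linear bounded_linear_fst
      bounded_linear_snd)

lemma Ck_on_bc_det: "Ck_on k S bc_det"
  unfolding bc_det_def by (intro Ck_on_polynomial_intros)

lemma Ck_on_bc_norm: "Ck_on k S bc_norm"
  unfolding bc_norm_def power2_eq_square
  by (intro Ck_on_polynomial_intros Ck_on_inner Ck_on_bc_det)

lemma Ck_on_bc_adj: "Ck_on k S bc_adj"
  unfolding bc_adj_def Let_def by (intro Ck_on_polynomial_intros)

lemma open_bc_norm_neq_0: "open {x. bc_norm x \<noteq> 0}"
  using Ck_on_bc_norm[of 0 UNIV] by (simp add: open_Collect_neq continuous_on_const)

lemma smooth_on_bc_inv: "smooth_on {x. bc_norm x \<noteq> 0} bc_inv"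
  unfolding smooth_on_def bc_inv_def
  by (auto intro!: open_bc_norm_neq_0 Ck_on_scaleR Ck_on_inverse Ck_on_bc_norm Ck_on_bc_adj)

lemma hypersurface_chart:
  fixes \<phi> \<psi> :: "'a::euclidean_space \<Rightarrow> 'a"
  assumes "p \<in> U"
    and smooth: "smooth_on U \<phi>" "smooth_on V \<psi>"
    and maps: "\<phi> ` U \<subseteq> V" "\<psi> ` V \<subseteq> U"
    and inverse: "\<And>x. x \<in> U \<Longrightarrow> \<psi> (\<phi> x) = x" "\<And>y. y \<in> V \<Longrightarrow> \<phi> (\<psi> y) = y"
    and c: "c \<in> Basis"
    and M: "\<And>x. x \<in> U \<Longrightarrow> x \<in> M \<longleftrightarrow> \<phi> x \<bullet> c = 0"
  shows "\<exists>U V \<phi>. p \<in> U \<and> diffeo_betw U V \<phi> \<and>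
    (\<exists>B\<subseteq>Basis. card B = DIM('a) - 1 \<and> \<phi> ` (U \<inter> M) = V \<inter> {y. \<forall>i\<in>Basis - B. y \<bullet> i = 0})"
proof (intro conjI exI)
  show "p \<in> U" by fact
  have bij: "bij_betw \<phi> U V"
    using maps inverse by (intro bij_betw_byWitness[where f'=\<psi>]) auto
  have "inv_into U \<phi> y = \<psi> y" if "y \<in> V" for y
    using bij inverse that maps by (metis bij_betw_inv_into_left image_subset_iff)
  then have "smooth_on V (inv_into U \<phi>)"
    using smooth(2) Ck_on_cong[of V _ \<psi>] by (auto simp: smooth_on_def)
  then show "diffeo_betw U V \<phi>"
    using smooth bij by (simp add: diffeo_betw_def smooth_on_def)
  show "Basis - {c} \<subseteq> Basis" "card (Basis - {c}) = DIM('a) - 1"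
    using c by auto
  have "\<phi> ` (U \<inter> M) = V \<inter> {y. y \<bullet> c = 0}"
  proof (intro equalityI subsetI)
    fix y assume "y \<in> \<phi> ` (U \<inter> M)"
    then show "y \<in> V \<inter> {y. y \<bullet> c = 0}"
      using maps(1) M by blast
  next
    fix y assume y: "y \<in> V \<inter> {y. y \<bullet> c = 0}"
    then have "\<psi> y \<in> U \<inter> M"
      using maps(2) M[of "\<psi> y"] inverse(2)[of y] by auto
    then show "y \<in> \<phi> ` (U \<inter> M)"
      using inverse(2)[of y] y by force
  qed
  moreover have "Basis - (Basis - {c}) = {c}"
    using c by auto
  ultimately show "\<phi> ` (U \<inter> M) = V \<inter> {y. \<forall>i\<in>Basis - (Basis - {c}). y \<bullet> i = 0}"
    by simp
qed

lemma open_vec_nth_neq_0: "open {x :: real^'n. x $ i \<noteq> 0}"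
  by (intro open_Collect_neq linear_continuous_on bounded_linear_vec_nth continuous_on_const)

lemma P_set_chart:
  assumes "p \<in> P_set"
  shows "\<exists>U V \<phi>. p \<in> U \<and> diffeo_betw U V \<phi> \<and>
    (\<exists>B\<subseteq>Basis. card B = 3 \<and> \<phi> ` (U \<inter> P_set) = V \<inter> {y. \<forall>i\<in>Basis - B. y \<bullet> i = 0})"
proof -
  have chart: ?thesis
    if "p$i \<noteq> 0" and "c \<in> Basis"
      and "smooth_on {x. x$i \<noteq> 0} \<phi>" "smooth_on {x. x$i \<noteq> 0} \<psi>"
      and "\<phi> ` {x. x$i \<noteq> 0} \<subseteq> {x. x$i \<noteq> 0}" "\<psi> ` {x. x$i \<noteq> 0} \<subseteq> {x. x$i \<noteq> 0}"
      and "\<And>x. x$i \<noteq> 0 \<Longrightarrow> \<psi> (\<phi> x) = x" "\<And>y. y$i \<noteq> 0 \<Longrightarrow> \<phi> (\<psi> y) = y"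
      and "\<And>x. x$i \<noteq> 0 \<Longrightarrow> \<phi> x \<bullet> c = bc_det x"
    for i \<phi> \<psi> and c :: "real^4"
  proof -
    have "x \<in> P_set \<longleftrightarrow> \<phi> x \<bullet> c = 0" if "x$i \<noteq> 0" for x
      using that \<open>\<And>x. x$i \<noteq> 0 \<Longrightarrow> \<phi> x \<bullet> c = bc_det x\<close> by (auto simp: P_set_eq)
    then show ?thesis
      using hypersurface_chart[of p "{x. x$i \<noteq> 0}" \<phi> "{x. x$i \<noteq> 0}" \<psi> c P_set] that
      by simp
  qed
  have smooth: "smooth_on {x. x$i \<noteq> 0} f" if "\<And>k. Ck_on k {x. x$i \<noteq> 0} f"
    for i :: 4 and f :: "real^4 \<Rightarrow> real^4"
    using that open_vec_nth_neq_0 by (simp add: smooth_on_def)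
  consider "p$1 \<noteq> 0" | "p$2 \<noteq> 0" | "p$3 \<noteq> 0" | "p$4 \<noteq> 0"
    using assms by (auto simp: P_set_eq vec4_eq_iff)
  then show ?thesis
  proof cases
    case 1
    show ?thesis
      by (rule chart[OF 1, of "axis 4 1" "\<lambda>x. vector [x$1, x$2, x$3, bc_det x]"
            "\<lambda>y. vector [y$1, y$2, y$3, (y$4 + y$2*y$3) / y$1]"])
        (auto simp: vec4_eq_iff bc_det_def inner_axis field_simps
          intro!: smooth Ck_on_polynomial_intros Ck_on_bc_det Ck_on_divide)
  next
    case 2
    show ?thesis
      by (rule chart[OF 2, of "axis 3 1" "\<lambda>x. vector [x$1, x$2, bc_det x, x$4]"
            "\<lambda>y. vector [y$1, y$2, (y$1*y$4 - y$3) / y$2, y$4]"])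
        (auto simp: vec4_eq_iff bc_det_def inner_axis field_simps
          intro!: smooth Ck_on_polynomial_intros Ck_on_bc_det Ck_on_divide)
  next
    case 3
    show ?thesis
      by (rule chart[OF 3, of "axis 2 1" "\<lambda>x. vector [x$1, bc_det x, x$3, x$4]"
            "\<lambda>y. vector [y$1, (y$1*y$4 - y$2) / y$3, y$3, y$4]"])
        (auto simp: vec4_eq_iff bc_det_def inner_axis field_simps
          intro!: smooth Ck_on_polynomial_intros Ck_on_bc_det Ck_on_divide)
  next
    case 4
    show ?thesis
      by (rule chart[OF 4, of "axis 1 1" "\<lambda>x. vector [bc_det x, x$2, x$3, x$4]"
            "\<lambda>y. vector [(y$1 + y$2*y$3) / y$4, y$2, y$3, y$4]"])
        (auto simp: vec4_eq_iff bc_det_def inner_axis field_simps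
          intro!: smooth Ck_on_polynomial_intros Ck_on_bc_det Ck_on_divide)
  qed
qed

lemma embedded_submanifold_P_set: "embedded_submanifold 3 P_set"
  unfolding embedded_submanifold_def using P_set_chart by blast

theorem theorem2:
  shows "embedded_lie_group bc_mult bc_one P_set"
  unfolding embedded_lie_group_def
proof (intro conjI exI)
  show "group \<lparr>carrier = P_set, mult = bc_mult, one = bc_one\<rparr>"
    by (rule group_P_group)
  show "embedded_submanifold 3 P_set"
    by (rule embedded_submanifold_P_set)
  show "P_set \<times> P_set \<subseteq> UNIV" "smooth_on UNIV (\<lambda>p. bc_mult (fst p) (snd p))"
    by (simp_all add: smooth_on_bc_mult)
  show "P_set \<subseteq> {x. bc_norm x \<noteq> 0}"
    using bc_norm_pos by force
  show "smooth_on {x. bc_norm x \<noteq> 0} bc_inv"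
    by (rule smooth_on_bc_inv)
  show "\<forall>x\<in>P_set. bc_inv x = inv\<^bsub>\<lparr>carrier = P_set, mult = bc_mult, one = bc_one\<rparr>\<^esub> x"
    by (simp add: inv_P_group)
qed simp

end
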